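(* Let $R$ be a Noetherian local ring and let $\varphi$ be an integral local self-map of $R$ (i.e. $R$ is integral over $\varphi(R)$). Assume that every minimal prime ideal of $R$ contains $\ker\varphi$. Then the map ${}^a\varphi:\operatorname{Spec}(R)\to\operatorname{Spec}(R)$, $\mathfrak{p}\mapsto\varphi^{-1}(\mathfrak{p})$, restricts to a permutation of the finite set $\operatorname{Min}(R)$ of minimal prime ideals of $R$.
   Context: A self-map of a ring is a ring endomorphism; local means $\varphi(\mathfrak{m})\subseteq\mathfrak{m}$. *)

theory Defs
  imports "HOL-Algebra.Algebra"
begin

definition local_ring :: "('a, 'b) ring_scheme \<Rightarrow> bool" where
  "local_ring R \<longleftrightarrow> cring R \<and> \<one>\<^bsub>R\<^esub> \<noteq> \<zero>\<^bsub>R\<^esub> \<and> (\<exists>!m. maximalideal m R)"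

definition max_ideal :: "('a, 'b) ring_scheme \<Rightarrow> 'a set" where
  "max_ideal R = (THE m. maximalideal m R)"

definition min_primes :: "('a, 'b) ring_scheme \<Rightarrow> 'a set set" where
  "min_primes R = {P. primeideal P R \<and> (\<forall>Q. primeideal Q R \<and> Q \<subseteq> P \<longrightarrow> Q = P)}"

(* x is integral over the subset S: root of a monic polynomial with coefficients in S
   (polynomials as coefficient lists, highest degree first, as in HOL-Algebra.Polynomials) *)
definition integral_over :: "('a, 'b) ring_scheme \<Rightarrow> 'a set \<Rightarrow> 'a \<Rightarrow> bool" where
  "integral_over R S x \<longleftrightarrow>
     (\<exists>p. p \<noteq> [] \<and> set p \<subseteq> S \<and> hd p = \<one>\<^bsub>R\<^esub> \<and> ring.eval R p x = \<zero>\<^bsub>R\<^esub>)"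

definition integral_hom :: "('a, 'b) ring_scheme \<Rightarrow> ('a \<Rightarrow> 'a) \<Rightarrow> bool" where
  "integral_hom R \<phi> \<longleftrightarrow> (\<forall>x \<in> carrier R. integral_over R (\<phi> ` carrier R) x)"

definition spec_map :: "('a, 'b) ring_scheme \<Rightarrow> ('a \<Rightarrow> 'a) \<Rightarrow> 'a set \<Rightarrow> 'a set" where
  "spec_map R \<phi> P = {x \<in> carrier R. \<phi> x \<in> P}"

end

theory Submission
  imports Defs
begin

(* The argument needs only that R is a Noetherian commutative ring and that
   ker phi lies in every minimal prime.

   1. A prime containing a finite product (or a power) contains a factor, so a
      prime that contains the intersection of finitely many ideals contains
      one of them.
   2. Noetherian induction: in a Noetherian ring the radical of every ideal
      contains an intersection of finitely many primes.  A maximal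
      counterexample I is not prime; for a, b \<notin> I with a * b \<in> I the
      two larger ideals I + (a), I + (b) give families whose union works for I.
   3. Applied to the zero ideal: Min(R) is finite, every prime contains a
      minimal prime, and the intersection of Min(R) is the nilradical.
   4. For a minimal prime Q, the contractions phi^-1(P), P \<in> Min(R), have an
      intersection inside Q (an element x of it has phi x nilpotent, so a
      power of x lies in ker phi \<subseteq> Q); by step 1 some phi^-1(P) \<subseteq> Q, and
      minimality of Q forces equality.  So Min(R) is covered by its image
      under contraction, and a finite set covered by its own image is permuted. *)

context cring
begin

lemma primeideal_finprod:
  assumes P: "primeideal P R" and fin: "finite A" and f: "f \<in> A \<rightarrow> carrier R"
    and inP: "finprod R f A \<in> P"
  shows "\<exists>x\<in>A. f x \<in> P"
  using fin f inP
proof (induction A rule: finite_induct)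
  case empty
  then show ?case
    using P primeideal.I_notcarr ideal.one_imp_carrier primeideal.axioms(1) by fastforce
next
  case (insert x A)
  have "finprod R f (insert x A) = f x \<otimes> finprod R f A"
    using insert by (intro finprod_insert) auto
  with insert have "f x \<otimes> finprod R f A \<in> P" by simp
  then have "f x \<in> P \<or> finprod R f A \<in> P"
    using primeideal.I_prime[OF P] insert.prems by (auto intro: finprod_closed)
  then show ?case using insert by auto
qed

lemma ideal_finprod:
  assumes I: "ideal I R" and fin: "finite A" and f: "f \<in> A \<rightarrow> carrier R"
    and x: "x \<in> A" and fx: "f x \<in> I"
  shows "finprod R f A \<in> I"
proof -
  have A: "A = insert x (A - {x})" using x by auto
  have "finprod R f A = f x \<otimes> finprod R f (A - {x})"
    by (subst A, rule finprod_insert) (use fin f x in auto)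
  also have "\<dots> \<in> I"
    by (rule ideal.I_r_closed[OF I fx], rule finprod_closed) (use f in auto)
  finally show ?thesis .
qed

lemma primeideal_pow:
  assumes P: "primeideal P R" and x: "x \<in> carrier R" and k: "x [^] (k::nat) \<in> P"
  shows "x \<in> P"
  using k
proof (induction k)
  case 0
  then show ?case
    using P primeideal.I_notcarr ideal.one_imp_carrier primeideal.axioms(1) by fastforce
next
  case (Suc k)
  have "x [^] k \<otimes> x \<in> P" using Suc.prems x by simp
  then have "x [^] k \<in> P \<or> x \<in> P"
    using primeideal.I_prime[OF P] x by auto
  then show ?case using Suc.IH by auto
qed

(* If a prime contains the intersection of finitely many ideals, it contains one
   of them: otherwise the product of witnesses lies in the intersection but not in P. *)
lemma primeideal_contains_Inter:
  assumes fin: "finite F" and ideals: "\<forall>J\<in>F. ideal J R"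
    and P: "primeideal P R" and sub: "carrier R \<inter> \<Inter>F \<subseteq> P"
  shows "\<exists>J\<in>F. J \<subseteq> P"
proof (rule ccontr)
  assume "\<not> ?thesis"
  then have "\<forall>J\<in>F. \<exists>y. y \<in> J \<and> y \<notin> P" by blast
  then obtain g where g: "\<And>J. J \<in> F \<Longrightarrow> g J \<in> J \<and> g J \<notin> P" by metis
  have gc: "g \<in> F \<rightarrow> carrier R"
    using g ideals ideal.Icarr by fastforce
  have "finprod R g F \<in> J" if "J \<in> F" for J
    using ideal_finprod[OF _ fin gc that] g that ideals by blast
  then have "finprod R g F \<in> P"
    using sub finprod_closed[OF gc] by blast
  then show False
    using primeideal_finprod[OF P fin gc] g by blast
qed

end

lemma (in noetherian_ring) ideal_set_has_maximal:
  assumes ne: "S \<noteq> {}" and ideals: "S \<subseteq> {I. ideal I R}"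
  shows "\<exists>M\<in>S. \<forall>J\<in>S. M \<subseteq> J \<longrightarrow> J = M"
proof (rule subset_Zorn_nonempty[OF ne])
  fix C assume C: "C \<noteq> {}" "subset.chain S C"
  have CS: "C \<subseteq> S" and tot: "\<forall>x\<in>C. \<forall>y\<in>C. x \<subseteq> y \<or> y \<subseteq> x"
    using C(2) unfolding pred_on.chain_def by auto
  have "subset.chain {I. ideal I R} C"
    using CS ideals tot unfolding pred_on.chain_def by blast
  then have "\<Union>C \<in> C" by (rule ideal_chain_is_trivial[OF C(1)])
  then show "\<Union>C \<in> S" using CS by blast
qed

context cring
begin

definition radical :: "'a set \<Rightarrow> 'a set" where
  "radical I = {x \<in> carrier R. \<exists>k::nat. x [^] k \<in> I}"

definition radical_bounded :: "'a set \<Rightarrow> bool" where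
  "radical_bounded I \<longleftrightarrow>
     (\<exists>F. finite F \<and> (\<forall>P\<in>F. primeideal P R) \<and> carrier R \<inter> \<Inter>F \<subseteq> radical I)"

lemma radical_zero_subset_prime:
  assumes P: "primeideal P R"
  shows "radical {\<zero>} \<subseteq> P"
proof
  fix x assume "x \<in> radical {\<zero>}"
  then obtain k :: nat where x: "x \<in> carrier R" and "x [^] k = \<zero>"
    unfolding radical_def by blast
  then have "x [^] k \<in> P"
    using P by (simp add: additive_subgroup.zero_closed ideal.axioms(1) primeideal.axioms(1))
  then show "x \<in> P" by (rule primeideal_pow[OF P x])
qed

lemma mult_add_cgenideal:
  assumes I: "ideal I R" and a: "a \<in> carrier R" and b: "b \<in> carrier R"
    and ab: "a \<otimes> b \<in> I"
    and u: "u \<in> I <+>\<^bsub>R\<^esub> PIdl a" and v: "v \<in> I <+>\<^bsub>R\<^esub> PIdl b"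
  shows "u \<otimes> v \<in> I"
proof -
  obtain i1 r1 where u': "u = i1 \<oplus> r1 \<otimes> a" "i1 \<in> I" "r1 \<in> carrier R"
    using u unfolding set_add_def' cgenideal_def by blast
  obtain i2 r2 where v': "v = i2 \<oplus> r2 \<otimes> b" "i2 \<in> I" "r2 \<in> carrier R"
    using v unfolding set_add_def' cgenideal_def by blast
  have i1: "i1 \<in> carrier R" and i2: "i2 \<in> carrier R"
    using u' v' ideal.Icarr[OF I] by auto
  have ag: "additive_subgroup I R" using I ideal.axioms(1) by blast
  have vc: "v \<in> carrier R" and ra: "r1 \<otimes> a \<in> carrier R" and rb: "r2 \<otimes> b \<in> carrier R"
    using u' v' i2 a b by simp_all
  have expand: "u \<otimes> v = i1 \<otimes> v \<oplus> ((r1 \<otimes> a) \<otimes> i2 \<oplus> (a \<otimes> b) \<otimes> (r1 \<otimes> r2))"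
  proof -
    have "(r1 \<otimes> a) \<otimes> (r2 \<otimes> b) = (a \<otimes> b) \<otimes> (r1 \<otimes> r2)"
      using u'(3) v'(3) a b by (simp add: m_ac)
    then show ?thesis
      unfolding u'(1) l_distr[OF i1 ra vc] unfolding v'(1) r_distr[OF i2 rb ra] by simp
  qed
  have "i1 \<otimes> v \<in> I" using ideal.I_r_closed[OF I u'(2) vc] .
  moreover have "(r1 \<otimes> a) \<otimes> i2 \<in> I" using ideal.I_l_closed[OF I v'(2) ra] .
  moreover have "(a \<otimes> b) \<otimes> (r1 \<otimes> r2) \<in> I"
    using ideal.I_r_closed[OF I ab] u'(3) v'(3) by simp
  ultimately show ?thesis
    unfolding expand by (intro additive_subgroup.a_closed[OF ag])
qed

lemma radical_bounded_split:
  assumes I: "ideal I R" and a: "a \<in> carrier R" and b: "b \<in> carrier R"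
    and ab: "a \<otimes> b \<in> I"
    and Ia: "radical_bounded (I <+>\<^bsub>R\<^esub> PIdl a)" and Ib: "radical_bounded (I <+>\<^bsub>R\<^esub> PIdl b)"
  shows "radical_bounded I"
proof -
  obtain F1 where F1: "finite F1" "\<forall>P\<in>F1. primeideal P R"
      "carrier R \<inter> \<Inter>F1 \<subseteq> radical (I <+>\<^bsub>R\<^esub> PIdl a)"
    using Ia unfolding radical_bounded_def by blast
  obtain F2 where F2: "finite F2" "\<forall>P\<in>F2. primeideal P R"
      "carrier R \<inter> \<Inter>F2 \<subseteq> radical (I <+>\<^bsub>R\<^esub> PIdl b)"
    using Ib unfolding radical_bounded_def by blast
  have "carrier R \<inter> \<Inter>(F1 \<union> F2) \<subseteq> radical I"
  proof
    fix x assume x: "x \<in> carrier R \<inter> \<Inter>(F1 \<union> F2)"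
    obtain k :: nat where k: "x [^] k \<in> I <+>\<^bsub>R\<^esub> PIdl a"
      using F1(3) x unfolding radical_def by blast
    obtain l :: nat where l: "x [^] l \<in> I <+>\<^bsub>R\<^esub> PIdl b"
      using F2(3) x unfolding radical_def by blast
    have "x [^] (k + l) = x [^] k \<otimes> x [^] l" using x by (simp add: nat_pow_mult)
    then have "x [^] (k + l) \<in> I" using mult_add_cgenideal[OF I a b ab k l] by simp
    then show "x \<in> radical I" using x unfolding radical_def by blast
  qed
  then show ?thesis
    unfolding radical_bounded_def using F1 F2 by (intro exI[of _ "F1 \<union> F2"]) auto
qed

lemma add_cgenideal_strict:
  assumes I: "ideal I R" and c: "c \<in> carrier R" "c \<notin> I"
  shows "I \<subseteq> I <+>\<^bsub>R\<^esub> PIdl c" and "I <+>\<^bsub>R\<^esub> PIdl c \<noteq> I"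
proof -
  have "\<zero> \<otimes> c \<in> PIdl c" and "\<one> \<otimes> c \<in> PIdl c" unfolding cgenideal_def by blast+
  moreover have "\<zero> \<in> I" using I by (simp add: additive_subgroup.zero_closed ideal.axioms(1))
  moreover have "y = y \<oplus> \<zero> \<otimes> c" if "y \<in> I" for y
    using that c ideal.Icarr[OF I] by simp
  moreover have "c = \<zero> \<oplus> \<one> \<otimes> c" using c by simp
  ultimately show "I \<subseteq> I <+>\<^bsub>R\<^esub> PIdl c" and "I <+>\<^bsub>R\<^esub> PIdl c \<noteq> I"
    using c unfolding set_add_def' by blast+
qed

lemma noetherian_radical_bounded:
  assumes N: "noetherian_ring R" and I: "ideal I R"
  shows "radical_bounded I"
proof (rule ccontr)
  assume "\<not> radical_bounded I"
  define S where "S = {J. ideal J R \<and> \<not> radical_bounded J}"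
  obtain M where "M \<in> S" and Mmax: "\<And>J. J \<in> S \<Longrightarrow> M \<subseteq> J \<Longrightarrow> J = M"
    using noetherian_ring.ideal_set_has_maximal[OF N, of S] \<open>\<not> radical_bounded I\<close> I
    unfolding S_def by blast
  then have M: "ideal M R" and Mbad: "\<not> radical_bounded M" by (auto simp: S_def)
  have "M \<noteq> carrier R"
  proof
    assume "M = carrier R"
    then have "radical_bounded M" unfolding radical_bounded_def radical_def
      by (intro exI[of _ "{}"]) (auto intro: exI[of _ "1::nat"])
    with Mbad show False by simp
  qed
  moreover have "\<not> primeideal M R"
  proof
    assume "primeideal M R"
    then have "radical_bounded M" unfolding radical_bounded_def radical_def
      by (intro exI[of _ "{M}"]) (auto intro: exI[of _ "1::nat"])
    with Mbad show False by simp
  qed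
  ultimately obtain a b where ab: "a \<in> carrier R" "b \<in> carrier R" "a \<otimes> b \<in> M"
      "a \<notin> M" "b \<notin> M"
    using primeidealI[OF M is_cring] by metis
  have bigger: "radical_bounded (M <+>\<^bsub>R\<^esub> PIdl c)" if "c \<in> carrier R" "c \<notin> M" for c
    using Mmax[of "M <+>\<^bsub>R\<^esub> PIdl c"] add_cgenideal_strict[OF M that]
      add_ideals[OF M cgenideal_ideal[OF that(1)]] unfolding S_def by blast
  have "radical_bounded M"
    using radical_bounded_split[OF M ab(1-3) bigger[OF ab(1,4)] bigger[OF ab(2,5)]] .
  with Mbad show False by simp
qed

lemma min_primes_of_nil_cover:
  assumes fin: "finite F" and primes: "\<forall>P\<in>F. primeideal P R"
    and nil: "carrier R \<inter> \<Inter>F \<subseteq> radical {\<zero>}"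
  shows "min_primes R \<subseteq> F"
    and "primeideal P R \<Longrightarrow> \<exists>Q\<in>min_primes R. Q \<subseteq> P"
proof -
  have ideals: "\<forall>J\<in>F. ideal J R" using primes primeideal.axioms(1) by blast
  have above: "\<exists>Q\<in>F. Q \<subseteq> P" if "primeideal P R" for P
    using primeideal_contains_Inter[OF fin ideals that]
      nil radical_zero_subset_prime[OF that] by blast
  show "min_primes R \<subseteq> F"
    using above primes unfolding min_primes_def by blast
  assume P: "primeideal P R"
  have "{Q\<in>F. Q \<subseteq> P} \<noteq> {}" using above[OF P] by blast
  then obtain Q where Q: "Q \<in> F" "Q \<subseteq> P"
      and Qmin: "\<forall>Q'\<in>{Q\<in>F. Q \<subseteq> P}. Q' \<subseteq> Q \<longrightarrow> Q = Q'"
    using finite_has_minimal[of "{Q\<in>F. Q \<subseteq> P}"] fin by auto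
  have "Q \<in> min_primes R"
    unfolding min_primes_def
  proof (intro CollectI conjI allI impI)
    show "primeideal Q R" using Q primes by blast
    fix Q' assume Q': "primeideal Q' R \<and> Q' \<subseteq> Q"
    then obtain Q'' where "Q'' \<in> F" "Q'' \<subseteq> Q'" using above by blast
    moreover have "Q'' \<subseteq> P" using \<open>Q'' \<subseteq> Q'\<close> Q' Q(2) by blast
    ultimately have "Q = Q''" using Qmin Q' by blast
    then show "Q' = Q" using \<open>Q'' \<subseteq> Q'\<close> Q' by blast
  qed
  then show "\<exists>Q\<in>min_primes R. Q \<subseteq> P" using Q by blast
qed

lemma noetherian_min_primes:
  assumes N: "noetherian_ring R"
  shows "finite (min_primes R)"
    and "carrier R \<inter> \<Inter>(min_primes R) \<subseteq> radical {\<zero>}"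
    and "primeideal P R \<Longrightarrow> \<exists>Q\<in>min_primes R. Q \<subseteq> P"
proof -
  obtain F where F: "finite F" "\<forall>P\<in>F. primeideal P R" "carrier R \<inter> \<Inter>F \<subseteq> radical {\<zero>}"
    using noetherian_radical_bounded[OF N zeroideal] unfolding radical_bounded_def by blast
  note cover = min_primes_of_nil_cover[OF F]
  show "finite (min_primes R)" using cover(1) F(1) by (rule finite_subset)
  show "primeideal P R \<Longrightarrow> \<exists>Q\<in>min_primes R. Q \<subseteq> P" by (rule cover(2))
  have "carrier R \<inter> \<Inter>(min_primes R) \<subseteq> carrier R \<inter> \<Inter>F"
    using cover(2) F(2) by blast
  then show "carrier R \<inter> \<Inter>(min_primes R) \<subseteq> radical {\<zero>}" using F(3) by blast
qed

lemma min_prime_is_contraction: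
  assumes N: "noetherian_ring R" and hom: "\<phi> \<in> ring_hom R R"
    and ker: "\<forall>P \<in> min_primes R. a_kernel R R \<phi> \<subseteq> P"
    and Q: "Q \<in> min_primes R"
  shows "\<exists>P\<in>min_primes R. spec_map R \<phi> P = Q"
proof -
  interpret h: ring_hom_ring R R \<phi>
    using hom by (simp add: ring_axioms ring_hom_ringI2)
  let ?f = "spec_map R \<phi>"
  have Qp: "primeideal Q R" and Qmin: "\<And>Q'. primeideal Q' R \<Longrightarrow> Q' \<subseteq> Q \<Longrightarrow> Q' = Q"
    using Q unfolding min_primes_def by auto
  have contr_prime: "primeideal (?f P) R" if "P \<in> min_primes R" for P
    using h.primeideal_vimage[OF is_cring] that unfolding min_primes_def spec_map_def by blast
  have "carrier R \<inter> \<Inter>(?f ` min_primes R) \<subseteq> Q"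
  proof
    fix x assume x: "x \<in> carrier R \<inter> \<Inter>(?f ` min_primes R)"
    then have "\<phi> x \<in> carrier R \<inter> \<Inter>(min_primes R)"
      unfolding spec_map_def by auto
    then obtain k :: nat where "\<phi> x [^] k = \<zero>"
      using noetherian_min_primes(2)[OF N] unfolding radical_def by blast
    then have "x [^] k \<in> a_kernel R R \<phi>"
      using x h.hom_nat_pow unfolding a_kernel_def' by simp
    then show "x \<in> Q" using ker Q primeideal_pow[OF Qp] x by blast
  qed
  then obtain P where P: "P \<in> min_primes R" and PQ: "?f P \<subseteq> Q"
    using primeideal_contains_Inter[of "?f ` min_primes R" Q] Qp contr_prime
      noetherian_min_primes(1)[OF N] primeideal.axioms(1) by blast
  obtain Q' where "Q' \<in> min_primes R" "Q' \<subseteq> ?f P"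
    using noetherian_min_primes(3)[OF N contr_prime[OF P]] by blast
  then have "?f P = Q" using Qmin PQ unfolding min_primes_def by blast
  then show ?thesis using P by blast
qed

end

lemma finite_covered_by_image_bij:
  assumes fin: "finite M" and cover: "M \<subseteq> f ` M"
  shows "bij_betw f M M"
proof -
  have "card M \<le> card (f ` M)" using cover fin by (simp add: card_mono)
  then have "f ` M = M"
    using card_image_le[OF fin, of f] card_subset_eq[OF finite_imageI[OF fin] cover] by simp
  then show ?thesis
    using eq_card_imp_inj_on[OF fin, of f] by (simp add: bij_betw_def)
qed

theorem mainTheorem14:
  fixes R :: "('a, 'b) ring_scheme" and \<phi> :: "'a \<Rightarrow> 'a"
  assumes noeth: "noetherian_ring R"
    and loc: "local_ring R"
    and hom: "\<phi> \<in> ring_hom R R"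
    and loc_map: "\<phi> ` max_ideal R \<subseteq> max_ideal R"
    and integ: "integral_hom R \<phi>"
    and ker: "\<forall>P \<in> min_primes R. a_kernel R R \<phi> \<subseteq> P"
  shows "finite (min_primes R) \<and> bij_betw (spec_map R \<phi>) (min_primes R) (min_primes R)"
proof -
  interpret cring R using loc unfolding local_ring_def by blast
  have fin: "finite (min_primes R)" by (rule noetherian_min_primes(1)[OF noeth])
  have "min_primes R \<subseteq> spec_map R \<phi> ` min_primes R"
    using min_prime_is_contraction[OF noeth hom ker] by fastforce
  then show ?thesis using fin finite_covered_by_image_bij by blast
qed

end
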